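(* For every $t\ge 0$, every $k\ge 1$ and every collection $\Omega$ of functions, $$\rho_1\bigl(\mathsf{vwl}_k^{(t)}\bigr)=\rho_1\bigl(\mathsf{TL}_{k+1}^{(t)}(\Omega)\bigr).$$
   Context: Fix integers $n\ge 1$ and $\ell\ge 1$. A graph is a triple $G=(V_G,E_G,\mathrm{col}_G)$ with $V_G=[n]=\{1,\dots,n\}$, $E_G$ a set of unordered pairs of distinct vertices (undirected, no loops), and a vertex labelling $\mathrm{col}_G:V_G\to\mathbb R^\ell$; $N_G(v)=\{u:uv\in E_G\}$. Let $\mathcal G=\mathcal G_0$ be the set of all such graphs and, for $s\ge 1$, $\mathcal G_s=\{(G,\mathbf v):G\in\mathcal G,\ \mathbf v\in V_G^s\}$. Tensor language $\mathsf{TL}(\Omega)$: let $\Omega$ be a collection of functions, each of the form $f:\mathbb R^p\to\mathbb R$ for some $p\ge1$ depending on $f$. Expressions are generated by $\varphi::=\mathbf 1_{x=y}\mid \mathbf 1_{x\neq y}\mid E(x,y)\mid P_s(x)\mid \varphi\cdot\varphi\mid \varphi+\varphi\mid a\cdot\varphi\mid f(\varphi_1,\dots,\varphi_p)\mid \sum_x\varphi$, with $x,y$ index variables, $s\in[\ell]$, $a\in\mathbb R$, $f\in\Omega$ of arity $p$. Free variables: $\mathrm{free}(\mathbf 1_{x\,\mathrm{op}\,y})=\mathrm{free}(E(x,y))=\{x,y\}$, $\mathrm{free}(P_s(x))=\{x\}$; for $\varphi_1\cdot\varphi_2$, $\varphi_1+\varphi_2$, $f(\varphi_1,\dots,\varphi_p)$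 the union of the components' free variables; $\mathrm{free}(a\cdot\varphi)=\mathrm{free}(\varphi)$; $\mathrm{free}(\sum_x\varphi)=\mathrm{free}(\varphi)\setminus\{x\}$. Semantics: for a graph $G$ and a valuation $\nu$ mapping variables to $V_G$: $[\![E(x,y)]\!]^\nu_G=1$ if $\nu(x)\nu(y)\in E_G$ and $0$ otherwise; $[\![P_s(x)]\!]^\nu_G=\mathrm{col}_G(\nu(x))_s$; $[\![\mathbf 1_{x\,\mathrm{op}\,y}]\!]^\nu_G=1$ if $\nu(x)\,\mathrm{op}\,\nu(y)$ and $0$ otherwise; $\cdot$, $+$, scalar multiplication and $f$ act on the values of the components; $[\![\sum_x\varphi]\!]^\nu_G=\sum_{v\in V_G}[\![\varphi]\!]^{\nu[x\mapsto v]}_G$. For $\varphi$ with free variables among $x_1,\dots,x_s$ and $\mathbf v\in V_G^s$, $[\![\varphi]\!]^{\mathbf v}_G$ denotes the value under $x_i\mapsto v_i$. Summation depth $\mathrm{sd}$: $0$ for atoms, maximum over the components for $\cdot$, $+$, $f(\dots)$, $\mathrm{sd}(a\cdot\varphi)=\mathrm{sd}(\varphi)$, $\mathrm{sd}(\sum_x\varphi)=\mathrm{sd}(\varphi)+1$. $\mathsf{TL}_k(\Omega)$ is the set of expressions in which only variables from $\{x_1,\dots,x_k\}$ occur (free or bound; variables may be re-bound), and $\mathsf{TL}_k^{(t)}(\Omega)$ its subset of summation depth at most $t$. Separation power: for a set $\mathcal F$ of functions $f:\mathcal G_s\to\mathbb R^{m_f}$, $\rho_s(\mathcal F)=\{((G,\mathbf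 v),(H,\mathbf w))\in\mathcal G_s\times\mathcal G_s: f(G,\mathbf v)=f(H,\mathbf w)\ \forall f\in\mathcal F\}$ (for $s=0$, pairs of graphs), and $\rho_s(f)=\rho_s(\{f\})$. For a set $\mathcal L$ of expressions, $\rho_s(\mathcal L)$ is the set of pairs with $[\![\varphi]\!]^{\mathbf v}_G=[\![\varphi]\!]^{\mathbf w}_H$ for all $\varphi\in\mathcal L$ whose free variables are among $x_1,\dots,x_s$ (for $s=0$: all closed expressions in $\mathcal L$). $k$-dimensional Weisfeiler–Leman ($k\ge1$): for $\mathbf v\in V_G^k$, the atomic type $\mathsf{atp}_k(G,\mathbf v)$ records, for all $1\le i<j\le k$, whether $v_i=v_j$ and whether $v_iv_j\in E_G$, together with $\mathrm{col}_G(v_i)$ for all $i\in[k]$. Set $\mathsf{wl}_k^{(0)}(G,\mathbf v)=\mathsf{atp}_k(G,\mathbf v)$ and $\mathsf{wl}_k^{(t+1)}(G,\mathbf v)=\bigl(\mathsf{wl}_k^{(t)}(G,\mathbf v),\{\!\{(\mathsf{atp}_{k+1}(G,(v_1,\dots,v_k,u)),\mathsf{wl}_k^{(t)}(G,\mathbf v[u/1]),\dots,\mathsf{wl}_k^{(t)}(G,\mathbf v[u/k])):u\in V_G\}\!\}\bigr)$, where $\mathbf v[u/i]$ replaces the $i$-th entry of $\mathbf v$ by $u$ and $\{\!\{\cdot\}\!\}$ denotes a multiset. Labels are compared as formal objects across graphs. $\mathsf{vwl}_k^{(t)}(G,v)=\mathsf{wl}_k^{(t)}(G,(v,\dots,v))$.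 $\rho_1(\mathsf{vwl}_k^{(t)})$ is the set of pairs $((G,v),(H,w))$ with $\mathsf{vwl}_k^{(t)}(G,v)=\mathsf{vwl}_k^{(t)}(H,w)$. *)

theory Defs
  imports Complex_Main "HOL-Library.Multiset"
begin

text \<open>A graph is given by its edge set (a set of 2-element subsets of {1..n}) and a
vertex labelling col, where col v is a real list of length l (an element of R^l)
for v in {1..n}; col is extensional (the empty list outside the vertex set).\<close>

record graph =
  edges :: "nat set set"
  col   :: "nat \<Rightarrow> real list"

definition is_graph :: "nat \<Rightarrow> nat \<Rightarrow> graph \<Rightarrow> bool" where
  "is_graph n l G \<longleftrightarrow>
     edges G \<subseteq> {{u, v} | u v. u \<in> {1..n} \<and> v \<in> {1..n} \<and> u \<noteq> v} \<and>
     (\<forall>v\<in>{1..n}. length (col G v) = l) \<and>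
     (\<forall>v. v \<notin> {1..n} \<longrightarrow> col G v = [])"

text \<open>Index variables are x_i, represented by the natural number i.
Lab s x is P_s(x). Fn f args is f(phi_1,...,phi_p). Sum x phi is the sum over x.\<close>

datatype tl =
    EqI nat nat
  | NeqI nat nat
  | Edge nat nat
  | Lab nat nat
  | Mul tl tl
  | Add tl tl
  | Smul real tl
  | Fn "real list \<Rightarrow> real" "tl list"
  | Sum nat tl

fun free_vars :: "tl \<Rightarrow> nat set" where
  "free_vars (EqI x y) = {x, y}"
| "free_vars (NeqI x y) = {x, y}"
| "free_vars (Edge x y) = {x, y}"
| "free_vars (Lab s x) = {x}"
| "free_vars (Mul a b) = free_vars a \<union> free_vars b"
| "free_vars (Add a b) = free_vars a \<union> free_vars b"
| "free_vars (Smul c a) = free_vars a"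
| "free_vars (Fn f args) = (\<Union>a\<in>set args. free_vars a)"
| "free_vars (Sum x a) = free_vars a - {x}"

fun all_vars :: "tl \<Rightarrow> nat set" where
  "all_vars (EqI x y) = {x, y}"
| "all_vars (NeqI x y) = {x, y}"
| "all_vars (Edge x y) = {x, y}"
| "all_vars (Lab s x) = {x}"
| "all_vars (Mul a b) = all_vars a \<union> all_vars b"
| "all_vars (Add a b) = all_vars a \<union> all_vars b"
| "all_vars (Smul c a) = all_vars a"
| "all_vars (Fn f args) = (\<Union>a\<in>set args. all_vars a)"
| "all_vars (Sum x a) = insert x (all_vars a)"

fun sum_depth :: "tl \<Rightarrow> nat" where
  "sum_depth (EqI x y) = 0"
| "sum_depth (NeqI x y) = 0"
| "sum_depth (Edge x y) = 0"
| "sum_depth (Lab s x) = 0"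
| "sum_depth (Mul a b) = max (sum_depth a) (sum_depth b)"
| "sum_depth (Add a b) = max (sum_depth a) (sum_depth b)"
| "sum_depth (Smul c a) = sum_depth a"
| "sum_depth (Fn f args) = Max (insert 0 (sum_depth ` set args))"
| "sum_depth (Sum x a) = Suc (sum_depth a)"

text \<open>Well-formedness w.r.t. the label dimension l and the function collection Omega
(a set of pairs (p, f), f being a function R^p -> R, R^p = real lists of length p).\<close>
fun wf_tl :: "nat \<Rightarrow> (nat \<times> (real list \<Rightarrow> real)) set \<Rightarrow> tl \<Rightarrow> bool" where
  "wf_tl l \<Omega> (EqI x y) = True"
| "wf_tl l \<Omega> (NeqI x y) = True"
| "wf_tl l \<Omega> (Edge x y) = True"
| "wf_tl l \<Omega> (Lab s x) = (s \<in> {1..l})"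
| "wf_tl l \<Omega> (Mul a b) = (wf_tl l \<Omega> a \<and> wf_tl l \<Omega> b)"
| "wf_tl l \<Omega> (Add a b) = (wf_tl l \<Omega> a \<and> wf_tl l \<Omega> b)"
| "wf_tl l \<Omega> (Smul c a) = wf_tl l \<Omega> a"
| "wf_tl l \<Omega> (Fn f args) = ((length args, f) \<in> \<Omega> \<and> (\<forall>a\<in>set args. wf_tl l \<Omega> a))"
| "wf_tl l \<Omega> (Sum x a) = wf_tl l \<Omega> a"

fun sem :: "nat \<Rightarrow> graph \<Rightarrow> (nat \<Rightarrow> nat) \<Rightarrow> tl \<Rightarrow> real" where
  "sem n G \<nu> (EqI x y) = (if \<nu> x = \<nu> y then 1 else 0)"
| "sem n G \<nu> (NeqI x y) = (if \<nu> x \<noteq> \<nu> y then 1 else 0)"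
| "sem n G \<nu> (Edge x y) = (if {\<nu> x, \<nu> y} \<in> edges G then 1 else 0)"
| "sem n G \<nu> (Lab s x) = col G (\<nu> x) ! (s - 1)"
| "sem n G \<nu> (Mul a b) = sem n G \<nu> a * sem n G \<nu> b"
| "sem n G \<nu> (Add a b) = sem n G \<nu> a + sem n G \<nu> b"
| "sem n G \<nu> (Smul c a) = c * sem n G \<nu> a"
| "sem n G \<nu> (Fn f args) = f (map (sem n G \<nu>) args)"
| "sem n G \<nu> (Sum x a) = (\<Sum>v\<in>{1..n}. sem n G (\<nu>(x := v)) a)"

definition TL :: "nat \<Rightarrow> (nat \<times> (real list \<Rightarrow> real)) set \<Rightarrow> nat \<Rightarrow> nat \<Rightarrow> tl set" where
  "TL l \<Omega> k t = {\<phi>. wf_tl l \<Omega> \<phi> \<and> all_vars \<phi> \<subseteq> {1..k} \<and> sum_depth \<phi> \<le> t}"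

definition rho1_TL :: "nat \<Rightarrow> nat \<Rightarrow> tl set \<Rightarrow> ((graph \<times> nat) \<times> (graph \<times> nat)) set" where
  "rho1_TL n l L = {((G, v), (H, w)).
      is_graph n l G \<and> is_graph n l H \<and> v \<in> {1..n} \<and> w \<in> {1..n} \<and>
      (\<forall>\<phi>\<in>L. free_vars \<phi> \<subseteq> {1} \<longrightarrow>
          sem n G (\<lambda>_. v) \<phi> = sem n H (\<lambda>_. w) \<phi>)}"

definition atp :: "graph \<Rightarrow> nat list \<Rightarrow> (bool \<times> bool) list \<times> real list list" where
  "atp G vs = ([(vs ! i = vs ! j, {vs ! i, vs ! j} \<in> edges G). i \<leftarrow> [0..<length vs], j \<leftarrow> [Suc i..<length vs]],
               map (col G) vs)"

datatype wlcol =
    WLBase "(bool \<times> bool) list \<times> real list list"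
  | WLStep wlcol "(((bool \<times> bool) list \<times> real list list) \<times> wlcol list) multiset"

text \<open>wl n G t vs is wl_k^(t)(G, vs) with k = length vs.\<close>
fun wl :: "nat \<Rightarrow> graph \<Rightarrow> nat \<Rightarrow> nat list \<Rightarrow> wlcol" where
  "wl n G 0 vs = WLBase (atp G vs)"
| "wl n G (Suc t) vs =
     WLStep (wl n G t vs)
       (image_mset (\<lambda>u. (atp G (vs @ [u]), map (\<lambda>i. wl n G t (vs[i := u])) [0..<length vs]))
          (mset_set {1..n}))"

definition vwl :: "nat \<Rightarrow> nat \<Rightarrow> nat \<Rightarrow> graph \<Rightarrow> nat \<Rightarrow> wlcol" where
  "vwl n k t G v = wl n G t (replicate k v)"

definition rho1_vwl :: "nat \<Rightarrow> nat \<Rightarrow> nat \<Rightarrow> nat \<Rightarrow> ((graph \<times> nat) \<times> (graph \<times> nat)) set" where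
  "rho1_vwl n l k t = {((G, v), (H, w)).
      is_graph n l G \<and> is_graph n l H \<and> v \<in> {1..n} \<and> w \<in> {1..n} \<and>
      vwl n k t G v = vwl n k t H w}"

end

theory Submission
  imports Defs "HOL-Library.FuncSet"
begin

text \<open>Both inclusions compare expressions in the variables \<open>x\<^sub>1, \<dots>, x\<^sub>k\<^sub>+\<^sub>1\<close> with the
  colours of the \<open>k\<close>-tuples obtained by omitting one variable.

  If two valuations have the same atomic type and all these \<open>k\<close>-tuples have equal
  \<open>t\<close>-round colours, every expression of summation depth \<open>t\<close> takes the same value: a
  sum over \<open>x\<close> is matched with the multiset in the refinement step of the \<open>k\<close>-tuple
  omitting \<open>x\<close>, reordering the tuple where necessary.

  Conversely, on finitely many graphs every colour class of a \<open>k\<close>-tuple of variables is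
  defined by an expression of the same summation depth. An expression with finitely many values
  is turned into the indicator of any of its values by a Lagrange polynomial; atomic types are
  products of such indicators of atoms, and for a refinement step one sums the indicator of each
  possible element of the multiset over a variable not in the tuple, which counts its
  multiplicity, and compares these counts with the desired ones.\<close>

lemma image_mset_mset_set_transfer:
  assumes "finite A" "finite B"
    and "image_mset f (mset_set A) = image_mset g (mset_set B)"
    and "\<And>a b. a \<in> A \<Longrightarrow> b \<in> B \<Longrightarrow> f a = g b \<Longrightarrow> f' a = g' b"
  shows "image_mset f' (mset_set A) = image_mset g' (mset_set B)"
  using assms
proof (induction A arbitrary: B rule: finite_induct)
  case empty
  then show ?case by (simp add: mset_set_empty_iff)
next
  case (insert a A)
  have "f a \<in># image_mset g (mset_set B)"
    using insert(1,2,5) by (metis image_mset_add_mset mset_set.insert union_single_eq_member)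
  then obtain b where b: "b \<in> B" "g b = f a" using insert(4) by auto
  have B: "mset_set B = add_mset b (mset_set (B - {b}))"
    using b insert(4) by (simp add: mset_set.remove)
  have "image_mset f (mset_set A) = image_mset g (mset_set (B - {b}))"
    using insert(1,2,5) B b by simp
  then have "image_mset f' (mset_set A) = image_mset g' (mset_set (B - {b}))"
    using insert by (intro insert.IH) auto
  moreover have "f' a = g' b" using insert(6)[of a b] b by auto
  ultimately show ?case using insert(1,2) B by simp
qed

lemma sum_eq_if_image_mset_eq:
  assumes "finite A" "finite B"
    and "image_mset f (mset_set A) = image_mset g (mset_set B)"
    and "\<And>a b. a \<in> A \<Longrightarrow> b \<in> B \<Longrightarrow> f a = g b \<Longrightarrow> F a = G b"
  shows "sum F A = (sum G B :: 'c :: comm_monoid_add)"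
  using image_mset_mset_set_transfer[OF assms] by (simp add: sum_unfold_sum_mset)

lemma count_image_mset_set:
  "finite A \<Longrightarrow> count (image_mset f (mset_set A)) e = (\<Sum>u\<in>A. if f u = e then 1 else 0)"
  by (induction A rule: finite_induct) auto

section \<open>Atomic types\<close>

definition loopless :: "graph \<Rightarrow> bool" where
  "loopless G \<longleftrightarrow> (\<forall>a. {a} \<notin> edges G)"

lemma is_graph_loopless: "is_graph n l G \<Longrightarrow> loopless G"
  unfolding is_graph_def loopless_def by (auto simp: doubleton_eq_iff)

definition same_atomic_type :: "graph \<Rightarrow> graph \<Rightarrow> (nat \<Rightarrow> nat) \<Rightarrow> (nat \<Rightarrow> nat) \<Rightarrow> nat set \<Rightarrow> bool"
  where "same_atomic_type X Y \<nu> \<mu> S \<longleftrightarrow>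
    (\<forall>a\<in>S. \<forall>b\<in>S. (\<nu> a = \<nu> b \<longleftrightarrow> \<mu> a = \<mu> b) \<and> ({\<nu> a, \<nu> b} \<in> edges X \<longleftrightarrow> {\<mu> a, \<mu> b} \<in> edges Y)) \<and>
    (\<forall>a\<in>S. col X (\<nu> a) = col Y (\<mu> a))"

lemma atp_eq_iff:
  assumes "length xs = length ys"
  shows "atp X xs = atp Y ys \<longleftrightarrow>
    (\<forall>i j. i < j \<and> j < length xs \<longrightarrow> (xs!i = xs!j \<longleftrightarrow> ys!i = ys!j) \<and>
         ({xs!i, xs!j} \<in> edges X \<longleftrightarrow> {ys!i, ys!j} \<in> edges Y)) \<and>
    (\<forall>i < length xs. col X (xs!i) = col Y (ys!i))"
proof -
  let ?pairs = "concat (map (\<lambda>i. map (\<lambda>j. (i,j)) [Suc i..<length xs]) [0..<length xs])"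
  have "set ?pairs = {(i,j). i < j \<and> j < length xs}" by (auto simp: image_iff)
  moreover have "map (col X) xs = map (col Y) ys \<longleftrightarrow> (\<forall>i < length xs. col X (xs!i) = col Y (ys!i))"
    using assms by (simp add: list_eq_iff_nth_eq)
  moreover have "atp G vs = (map (\<lambda>(i,j). (vs ! i = vs ! j, {vs ! i, vs ! j} \<in> edges G)) ?pairs,
      map (col G) vs)" if "length vs = length xs" for G vs
    using that by (simp add: atp_def map_concat comp_def)
  ultimately show ?thesis
    using assms unfolding map_eq_conv by auto
qed

lemma atp_map_eq_iff:
  assumes "loopless X" "loopless Y"
  shows "atp X (map \<nu> \<tau>) = atp Y (map \<mu> \<tau>) \<longleftrightarrow> same_atomic_type X Y \<nu> \<mu> (set \<tau>)"
proof -
  have "atp X (map \<nu> \<tau>) = atp Y (map \<mu> \<tau>) \<longleftrightarrow>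
    (\<forall>i j. i < j \<and> j < length \<tau> \<longrightarrow> (\<nu> (\<tau>!i) = \<nu> (\<tau>!j) \<longleftrightarrow> \<mu> (\<tau>!i) = \<mu> (\<tau>!j)) \<and>
         ({\<nu> (\<tau>!i), \<nu> (\<tau>!j)} \<in> edges X \<longleftrightarrow> {\<mu> (\<tau>!i), \<mu> (\<tau>!j)} \<in> edges Y)) \<and>
    (\<forall>i < length \<tau>. col X (\<nu> (\<tau>!i)) = col Y (\<mu> (\<tau>!i)))" (is "_ \<longleftrightarrow> ?pairs \<and> ?cols")
    by (subst atp_eq_iff) auto
  also have "\<dots> \<longleftrightarrow> same_atomic_type X Y \<nu> \<mu> (set \<tau>)"
  proof
    assume H: "?pairs \<and> ?cols"
    have "(\<nu> a = \<nu> b \<longleftrightarrow> \<mu> a = \<mu> b) \<and> ({\<nu> a, \<nu> b} \<in> edges X \<longleftrightarrow> {\<mu> a, \<mu> b} \<in> edges Y)"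
      if ab: "a \<in> set \<tau>" "b \<in> set \<tau>" for a b
    proof -
      obtain i j where ij: "i < length \<tau>" "j < length \<tau>" "\<tau>!i = a" "\<tau>!j = b"
        using ab by (auto simp: in_set_conv_nth)
      consider "i < j" | "j < i" | "i = j" by linarith
      then show ?thesis
      proof cases
        case 1
        then show ?thesis using H ij by auto
      next
        case 2
        then have "(\<nu> b = \<nu> a \<longleftrightarrow> \<mu> b = \<mu> a) \<and> ({\<nu> b, \<nu> a} \<in> edges X \<longleftrightarrow> {\<mu> b, \<mu> a} \<in> edges Y)"
          using H ij by auto
        then show ?thesis by (auto simp: insert_commute)
      next
        case 3
        then show ?thesis using ij assms unfolding loopless_def by auto
      qed
    qed
    then show "same_atomic_type X Y \<nu> \<mu> (set \<tau>)"
      using H unfolding same_atomic_type_def by (auto simp: in_set_conv_nth)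
  next
    assume "same_atomic_type X Y \<nu> \<mu> (set \<tau>)"
    then show "?pairs \<and> ?cols" unfolding same_atomic_type_def by (meson nth_mem order.strict_trans)
  qed
  finally show ?thesis .
qed

section \<open>Weisfeiler--Leman colours of tuples of variables\<close>

definition wl_step :: "nat \<Rightarrow> graph \<Rightarrow> nat \<Rightarrow> nat list \<Rightarrow> nat \<Rightarrow>
    ((bool \<times> bool) list \<times> real list list) \<times> wlcol list" where
  "wl_step n G t vs u = (atp G (vs @ [u]), map (\<lambda>i. wl n G t (vs[i := u])) [0..<length vs])"

lemma wl_Suc_eq_iff:
  "wl n X (Suc t) xs = wl n Y (Suc t) ys \<longleftrightarrow> wl n X t xs = wl n Y t ys \<and>
    image_mset (wl_step n X t xs) (mset_set {1..n}) = image_mset (wl_step n Y t ys) (mset_set {1..n})"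
  by (simp add: wl_step_def[abs_def])

lemma wl_imp_atp_eq: "wl n X t xs = wl n Y t ys \<Longrightarrow> atp X xs = atp Y ys"
  by (induction t) auto

lemma wl_step_fresh_eq_iff:
  assumes "loopless X" "loopless Y" "z \<notin> set A"
  shows "wl_step n X t (map \<nu> A) u = wl_step n Y t (map \<mu> A) u' \<longleftrightarrow>
    same_atomic_type X Y (\<nu>(z := u)) (\<mu>(z := u')) (insert z (set A)) \<and>
    (\<forall>i < length A. wl n X t (map (\<nu>(z := u)) (A[i := z])) = wl n Y t (map (\<mu>(z := u')) (A[i := z])))"
proof -
  have "map \<nu> A @ [u] = map (\<nu>(z := u)) (A @ [z])" "(map \<nu> A)[i := u] = map (\<nu>(z := u)) (A[i := z])"
    "map \<mu> A @ [u'] = map (\<mu>(z := u')) (A @ [z])" "(map \<mu> A)[i := u'] = map (\<mu>(z := u')) (A[i := z])"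
    for i using assms(3) by (simp_all add: map_update)
  note upd = this
  show ?thesis
    unfolding wl_step_def prod.inject upd atp_map_eq_iff[OF assms(1,2)] by (auto simp: map_eq_conv)
qed

lemma wl_map_eq_perm:
  fixes A B :: "nat list"
  assumes "loopless X" "loopless Y"
  shows "distinct A \<Longrightarrow> distinct B \<Longrightarrow> set A = set B \<Longrightarrow>
    wl n X t (map \<nu> A) = wl n Y t (map \<mu> A) \<Longrightarrow> wl n X t (map \<nu> B) = wl n Y t (map \<mu> B)"
proof (induction t arbitrary: A B \<nu> \<mu>)
  case 0
  then show ?case using atp_map_eq_iff[OF assms, of \<nu> A \<mu>] atp_map_eq_iff[OF assms, of \<nu> B \<mu>] by simp
next
  case (Suc t)
  obtain z :: nat where zA: "z \<notin> set A" using ex_new_if_finite[of "set A"] by auto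
  with Suc.prems have zB: "z \<notin> set B" by simp
  have "wl n X t (map \<nu> B) = wl n Y t (map \<mu> B)"
    using Suc.prems(4) Suc.IH[OF Suc.prems(1-3)] unfolding wl_Suc_eq_iff by blast
  moreover have "image_mset (wl_step n X t (map \<nu> B)) (mset_set {1..n})
      = image_mset (wl_step n Y t (map \<mu> B)) (mset_set {1..n})"
  proof (rule image_mset_mset_set_transfer)
    show "image_mset (wl_step n X t (map \<nu> A)) (mset_set {1..n})
      = image_mset (wl_step n Y t (map \<mu> A)) (mset_set {1..n})"
      using Suc.prems(4) unfolding wl_Suc_eq_iff by blast
  next
    fix u u' assume "wl_step n X t (map \<nu> A) u = wl_step n Y t (map \<mu> A) u'"
    then have atp: "same_atomic_type X Y (\<nu>(z := u)) (\<mu>(z := u')) (insert z (set A))"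
      and upd: "\<And>i. i < length A \<Longrightarrow>
        wl n X t (map (\<nu>(z := u)) (A[i := z])) = wl n Y t (map (\<mu>(z := u')) (A[i := z]))"
      using wl_step_fresh_eq_iff[OF assms zA] by auto
    have "wl n X t (map (\<nu>(z := u)) (B[i := z])) = wl n Y t (map (\<mu>(z := u')) (B[i := z]))"
      if i: "i < length B" for i
    proof -
      obtain i' where i': "i' < length A" "A ! i' = B ! i"
        using i Suc.prems(3) by (metis in_set_conv_nth nth_mem)
      have "set (A[i' := z]) = set (B[i := z])"
        using Suc.prems i i' by (simp add: set_update_distinct)
      moreover have "distinct (A[i' := z])" "distinct (B[i := z])"
        using Suc.prems zA zB by (simp_all add: distinct_list_update)
      ultimately show ?thesis using Suc.IH upd[OF i'(1)] by blast
    qed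
    then show "wl_step n X t (map \<nu> B) u = wl_step n Y t (map \<mu> B) u'"
      using wl_step_fresh_eq_iff[OF assms zB] atp Suc.prems(3) by simp
  qed simp_all
  ultimately show ?case unfolding wl_Suc_eq_iff by blast
qed

section \<open>Equal colours give equal values of tensor language expressions\<close>

definition vars_except :: "nat \<Rightarrow> nat \<Rightarrow> nat list" where
  "vars_except K j = filter (\<lambda>x. x \<noteq> j) [1..<Suc K]"

lemma distinct_vars_except [simp]: "distinct (vars_except K j)"
  by (simp add: vars_except_def)

lemma set_vars_except [simp]: "set (vars_except K j) = {1..K} - {j}"
  by (auto simp: vars_except_def)

lemma length_vars_except: "j \<in> {1..K} \<Longrightarrow> length (vars_except K j) = K - 1"
  using distinct_card[OF distinct_vars_except, of K j] by simp

text \<open>The invariant of the induction over expressions in \<open>x\<^sub>1, \<dots>, x\<^sub>K\<close>: a sum over \<open>x\<^sub>j\<close> is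
  matched with the refinement step of the tuple omitting \<open>x\<^sub>j\<close>.\<close>

definition wl_equiv :: "nat \<Rightarrow> graph \<Rightarrow> graph \<Rightarrow> nat \<Rightarrow> nat \<Rightarrow> (nat \<Rightarrow> nat) \<Rightarrow> (nat \<Rightarrow> nat) \<Rightarrow> bool"
  where "wl_equiv n X Y K t \<nu> \<mu> \<longleftrightarrow> same_atomic_type X Y \<nu> \<mu> {1..K} \<and>
    (\<forall>j\<in>{1..K}. wl n X t (map \<nu> (vars_except K j)) = wl n Y t (map \<mu> (vars_except K j)))"

lemma wl_equiv_fun_upd:
  assumes "loopless X" "loopless Y" "x \<in> {1..K}"
    and "wl n X t (map \<nu> (vars_except K x)) = wl n Y t (map \<mu> (vars_except K x))"
    and "wl_step n X t (map \<nu> (vars_except K x)) u = wl_step n Y t (map \<mu> (vars_except K x)) u'"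
  shows "wl_equiv n X Y K t (\<nu>(x := u)) (\<mu>(x := u'))"
proof -
  let ?D = "vars_except K x"
  have x: "x \<notin> set ?D" by simp
  have atp: "same_atomic_type X Y (\<nu>(x := u)) (\<mu>(x := u')) (insert x (set ?D))"
    and upd: "\<And>i. i < length ?D \<Longrightarrow>
      wl n X t (map (\<nu>(x := u)) (?D[i := x])) = wl n Y t (map (\<mu>(x := u')) (?D[i := x]))"
    using wl_step_fresh_eq_iff[OF assms(1,2) x] assms(5) by auto
  have "wl n X t (map (\<nu>(x := u)) (vars_except K j)) = wl n Y t (map (\<mu>(x := u')) (vars_except K j))"
    if j: "j \<in> {1..K}" for j
  proof (cases "j = x")
    case True
    then show ?thesis using assms(4) by simp
  next
    case False
    then obtain i where i: "i < length ?D" "?D ! i = j"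
      using j by (metis DiffI in_set_conv_nth set_vars_except singletonD)
    have "set (?D[i := x]) = set (vars_except K j)"
      using i j False assms(3) by (auto simp: set_update_distinct)
    moreover have "distinct (?D[i := x])" by (simp add: distinct_list_update)
    ultimately show ?thesis
      using wl_map_eq_perm[OF assms(1,2)] upd[OF i(1)] distinct_vars_except by blast
  qed
  moreover have "insert x (set ?D) = {1..K}" using assms(3) by auto
  ultimately show ?thesis unfolding wl_equiv_def using atp by simp
qed

lemma sem_eq_if_wl_equiv:
  assumes "loopless X" "loopless Y"
  shows "all_vars \<phi> \<subseteq> {1..K} \<Longrightarrow> sum_depth \<phi> \<le> t \<Longrightarrow> wl_equiv n X Y K t \<nu> \<mu> \<Longrightarrow>
    sem n X \<nu> \<phi> = sem n Y \<mu> \<phi>"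
proof (induction \<phi> arbitrary: t \<nu> \<mu>)
  case (Mul a b)
  then show ?case using Mul.IH[of t \<nu> \<mu>] by simp
next
  case (Add a b)
  then show ?case using Add.IH[of t \<nu> \<mu>] by simp
next
  case (Smul c a)
  then show ?case using Smul.IH[of t \<nu> \<mu>] by simp
next
  case (Fn f args)
  have "sem n X \<nu> a = sem n Y \<mu> a" if "a \<in> set args" for a
    using Fn.IH[OF that _ _ Fn.prems(3)] Fn.prems(1,2) that by auto
  then have "map (sem n X \<nu>) args = map (sem n Y \<mu>) args" by simp
  then show ?case by (simp only: sem.simps)
next
  case (Sum x \<phi>)
  obtain t' where t: "t = Suc t'" and sd: "sum_depth \<phi> \<le> t'"
    using Sum.prems(2) by (cases t) auto
  let ?D = "vars_except K x"
  have x: "x \<in> {1..K}" using Sum.prems(1) by simp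
  then have "wl n X (Suc t') (map \<nu> ?D) = wl n Y (Suc t') (map \<mu> ?D)"
    using Sum.prems(3) t unfolding wl_equiv_def by blast
  then have w: "wl n X t' (map \<nu> ?D) = wl n Y t' (map \<mu> ?D)"
    and ms: "image_mset (wl_step n X t' (map \<nu> ?D)) (mset_set {1..n})
      = image_mset (wl_step n Y t' (map \<mu> ?D)) (mset_set {1..n})"
    unfolding wl_Suc_eq_iff by blast+
  have "(\<Sum>u\<in>{1..n}. sem n X (\<nu>(x := u)) \<phi>) = (\<Sum>u\<in>{1..n}. sem n Y (\<mu>(x := u)) \<phi>)"
    using Sum.IH[OF _ sd] Sum.prems(1) wl_equiv_fun_upd[OF assms x w]
    by (intro sum_eq_if_image_mset_eq[OF _ _ ms]) auto
  then show ?case by simp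
qed (auto simp: wl_equiv_def same_atomic_type_def)

lemma sem_eq_if_vwl_eq:
  assumes "is_graph n l X" "is_graph n l Y" "k \<ge> 1"
    and "wl n X t (replicate k v) = wl n Y t (replicate k w)"
    and "\<phi> \<in> TL l \<Omega> (k + 1) t"
  shows "sem n X (\<lambda>_. v) \<phi> = sem n Y (\<lambda>_. w) \<phi>"
proof -
  have loopless: "loopless X" "loopless Y" using assms(1,2) by (simp_all add: is_graph_loopless)
  have "atp X (map (\<lambda>_. v) (replicate k 1)) = atp Y (map (\<lambda>_. w) (replicate k 1))"
    using wl_imp_atp_eq[OF assms(4)] by simp
  then have "same_atomic_type X Y (\<lambda>_. v) (\<lambda>_. w) {1}"
    using atp_map_eq_iff[OF loopless] assms(3) by (metis set_replicate not_one_le_zero)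
  then have "same_atomic_type X Y (\<lambda>_. v) (\<lambda>_. w) {1..k + 1}"
    unfolding same_atomic_type_def by simp
  moreover have "map (\<lambda>_. u) (vars_except (k + 1) j) = replicate k u" if "j \<in> {1..k + 1}" for j u
    using length_vars_except[OF that] by (simp add: map_replicate_const)
  ultimately have "wl_equiv n X Y (k + 1) t (\<lambda>_. v) (\<lambda>_. w)"
    unfolding wl_equiv_def using assms(4) by metis
  then show ?thesis
    using sem_eq_if_wl_equiv[OF loopless] assms(5) unfolding TL_def by blast
qed

section \<open>Expressions defining colours\<close>

lemma sem_cong: "\<forall>x\<in>free_vars \<phi>. \<nu> x = \<mu> x \<Longrightarrow> sem n X \<nu> \<phi> = sem n X \<mu> \<phi>"
proof (induction \<phi> arbitrary: \<nu> \<mu>)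
  case (Mul a b)
  have "sem n X \<nu> a = sem n X \<mu> a" by (rule Mul.IH(1)) (use Mul.prems in auto)
  moreover have "sem n X \<nu> b = sem n X \<mu> b" by (rule Mul.IH(2)) (use Mul.prems in auto)
  ultimately show ?case by simp
next
  case (Add a b)
  have "sem n X \<nu> a = sem n X \<mu> a" by (rule Add.IH(1)) (use Add.prems in auto)
  moreover have "sem n X \<nu> b = sem n X \<mu> b" by (rule Add.IH(2)) (use Add.prems in auto)
  ultimately show ?case by simp
next
  case (Fn f args)
  have "map (sem n X \<nu>) args = map (sem n X \<mu>) args"
    by (rule map_cong[OF refl], rule Fn.IH) (use Fn.prems in auto)
  then show ?case by (simp only: sem.simps)
next
  case (Sum x \<phi>)
  have "sem n X (\<nu>(x := u)) \<phi> = sem n X (\<mu>(x := u)) \<phi>" for u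
    by (rule Sum.IH) (use Sum.prems in auto)
  then show ?case by simp
qed simp_all

lemma free_vars_subset_all_vars: "free_vars \<phi> \<subseteq> all_vars \<phi>"
  by (induction \<phi>) auto

text \<open>The variable \<open>x\<^sub>1\<close> is always admitted as a free variable, since the constant expression
  \<open>one = EqI 1 1\<close> below mentions it.\<close>

definition TL_over :: "nat \<Rightarrow> (nat \<times> (real list \<Rightarrow> real)) set \<Rightarrow> nat \<Rightarrow> nat set \<Rightarrow> nat \<Rightarrow> tl set" where
  "TL_over l \<Omega> K S t = {\<phi> \<in> TL l \<Omega> K t. free_vars \<phi> \<subseteq> insert 1 S}"

lemma sem_TL_over_cong:
  assumes "\<phi> \<in> TL_over l \<Omega> K S t" "\<And>x. x \<in> {1..K} \<Longrightarrow> \<nu> x = \<mu> x"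
  shows "sem n X \<nu> \<phi> = sem n X \<mu> \<phi>"
  using assms free_vars_subset_all_vars[of \<phi>] by (intro sem_cong) (auto simp: TL_over_def TL_def)

definition one :: tl where "one = EqI 1 1"

definition zero :: tl where "zero = Smul 0 one"

definition prodL :: "tl list \<Rightarrow> tl" where "prodL \<phi>s = foldr Mul \<phi>s one"

lemma sem_one [simp]: "sem n X \<nu> one = 1"
  by (simp add: one_def)

lemma sem_zero [simp]: "sem n X \<nu> zero = 0"
  by (simp add: zero_def)

lemma sem_prodL: "sem n X \<nu> (prodL \<phi>s) = (\<Prod>\<phi>\<leftarrow>\<phi>s. sem n X \<nu> \<phi>)"
  by (induction \<phi>s) (auto simp: prodL_def)

lemma TL_over_mono: "S \<subseteq> S' \<Longrightarrow> t \<le> t' \<Longrightarrow> TL_over l \<Omega> K S t \<subseteq> TL_over l \<Omega> K S' t'"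
  by (auto simp: TL_over_def TL_def)

lemma one_in_TL_over: "1 \<le> K \<Longrightarrow> one \<in> TL_over l \<Omega> K S t"
  by (simp add: TL_over_def TL_def one_def)

lemma zero_in_TL_over: "1 \<le> K \<Longrightarrow> zero \<in> TL_over l \<Omega> K S t"
  by (simp add: TL_over_def TL_def zero_def one_def)

lemma Mul_in_TL_over: "\<phi> \<in> TL_over l \<Omega> K S t \<Longrightarrow> \<psi> \<in> TL_over l \<Omega> K S t \<Longrightarrow> Mul \<phi> \<psi> \<in> TL_over l \<Omega> K S t"
  by (simp add: TL_over_def TL_def)

lemma Add_in_TL_over: "\<phi> \<in> TL_over l \<Omega> K S t \<Longrightarrow> \<psi> \<in> TL_over l \<Omega> K S t \<Longrightarrow> Add \<phi> \<psi> \<in> TL_over l \<Omega> K S t"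
  by (simp add: TL_over_def TL_def)

lemma Smul_in_TL_over: "\<phi> \<in> TL_over l \<Omega> K S t \<Longrightarrow> Smul c \<phi> \<in> TL_over l \<Omega> K S t"
  by (simp add: TL_over_def TL_def)

lemma Sum_in_TL_over:
  "\<phi> \<in> TL_over l \<Omega> K (insert z S) t \<Longrightarrow> z \<in> {1..K} \<Longrightarrow> Sum z \<phi> \<in> TL_over l \<Omega> K S (Suc t)"
  by (auto simp: TL_over_def TL_def)

lemma prodL_in_TL_over:
  "1 \<le> K \<Longrightarrow> (\<And>\<phi>. \<phi> \<in> set \<phi>s \<Longrightarrow> \<phi> \<in> TL_over l \<Omega> K S t) \<Longrightarrow> prodL \<phi>s \<in> TL_over l \<Omega> K S t"
  by (induction \<phi>s) (auto simp: prodL_def one_in_TL_over Mul_in_TL_over)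

lemma prod_list_lagrange_basis:
  fixes x a :: real
  assumes "x \<in> set bs"
  shows "(\<Prod>b\<leftarrow>filter (\<lambda>b. b \<noteq> a) bs. (x - b) / (a - b)) = (if x = a then 1 else 0)"
proof (cases "x = a")
  case True
  then have "map (\<lambda>b. (x - b) / (a - b)) (filter (\<lambda>b. b \<noteq> a) bs) = map (\<lambda>_. 1) (filter (\<lambda>b. b \<noteq> a) bs)"
    by simp
  then show ?thesis using True by (simp add: map_replicate_const)
next
  case False
  then show ?thesis using assms by (auto simp: prod_list_zero_iff)
qed

definition lagrange_indicator :: "real list \<Rightarrow> real \<Rightarrow> tl \<Rightarrow> tl" where
  "lagrange_indicator bs a \<psi> =
    prodL (map (\<lambda>b. Smul (1 / (a - b)) (Add \<psi> (Smul (- b) one))) (filter (\<lambda>b. b \<noteq> a) bs))"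

lemma sem_lagrange_indicator:
  assumes "sem n X \<nu> \<psi> \<in> set bs"
  shows "sem n X \<nu> (lagrange_indicator bs a \<psi>) = (if sem n X \<nu> \<psi> = a then 1 else 0)"
proof -
  have "sem n X \<nu> (lagrange_indicator bs a \<psi>) =
    (\<Prod>b\<leftarrow>filter (\<lambda>b. b \<noteq> a) bs. (sem n X \<nu> \<psi> - b) / (a - b))"
    by (simp add: lagrange_indicator_def sem_prodL comp_def)
  then show ?thesis using prod_list_lagrange_basis[OF assms] by simp
qed

lemma lagrange_indicator_in_TL_over:
  assumes "1 \<le> K" "\<psi> \<in> TL_over l \<Omega> K S t"
  shows "lagrange_indicator bs a \<psi> \<in> TL_over l \<Omega> K S t"
proof -
  have "Smul (1 / (a - b)) (Add \<psi> (Smul (- b) one)) \<in> TL_over l \<Omega> K S t" for b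
    using assms by (intro Smul_in_TL_over Add_in_TL_over one_in_TL_over)
  then show ?thesis
    unfolding lagrange_indicator_def using assms(1) by (intro prodL_in_TL_over) auto
qed

definition valuations :: "nat \<Rightarrow> nat \<Rightarrow> (nat \<Rightarrow> nat) set" where
  "valuations K n = {\<nu>. \<forall>x\<in>{1..K}. \<nu> x \<in> {1..n}}"

lemma fun_upd_in_valuations: "\<nu> \<in> valuations K n \<Longrightarrow> u \<in> {1..n} \<Longrightarrow> \<nu>(z := u) \<in> valuations K n"
  by (auto simp: valuations_def)

definition indicates :: "nat \<Rightarrow> graph set \<Rightarrow> nat \<Rightarrow> tl \<Rightarrow> (graph \<Rightarrow> (nat \<Rightarrow> nat) \<Rightarrow> bool) \<Rightarrow> bool"
  where "indicates n GS K \<phi> P \<longleftrightarrow>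
    (\<forall>X\<in>GS. \<forall>\<nu>\<in>valuations K n. sem n X \<nu> \<phi> = (if P X \<nu> then 1 else 0))"

definition definable :: "nat \<Rightarrow> graph set \<Rightarrow> nat \<Rightarrow> tl set \<Rightarrow> (graph \<Rightarrow> (nat \<Rightarrow> nat) \<Rightarrow> 'a) \<Rightarrow> bool"
  where "definable n GS K C F \<longleftrightarrow> (\<forall>c. \<exists>\<phi>\<in>C. indicates n GS K \<phi> (\<lambda>X \<nu>. F X \<nu> = c))"

lemma indicates_cong:
  "indicates n GS K \<phi> P \<Longrightarrow> (\<And>X \<nu>. X \<in> GS \<Longrightarrow> \<nu> \<in> valuations K n \<Longrightarrow> P X \<nu> \<longleftrightarrow> Q X \<nu>) \<Longrightarrow>
    indicates n GS K \<phi> Q"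
  by (simp add: indicates_def)

lemma indicates_one: "indicates n GS K one (\<lambda>_ _. True)"
  by (simp add: indicates_def)

lemma indicates_zero: "indicates n GS K zero (\<lambda>_ _. False)"
  by (simp add: indicates_def)

lemma indicates_Mul:
  "indicates n GS K \<phi> P \<Longrightarrow> indicates n GS K \<psi> Q \<Longrightarrow> indicates n GS K (Mul \<phi> \<psi>) (\<lambda>X \<nu>. P X \<nu> \<and> Q X \<nu>)"
  by (simp add: indicates_def)

lemma indicates_prodL:
  "(\<And>x. x \<in> set xs \<Longrightarrow> indicates n GS K (\<phi> x) (P x)) \<Longrightarrow>
    indicates n GS K (prodL (map \<phi> xs)) (\<lambda>X \<nu>. \<forall>x\<in>set xs. P x X \<nu>)"
proof (induction xs)
  case Nil
  then show ?case using indicates_one by (simp add: prodL_def)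
next
  case (Cons x xs)
  then show ?case using indicates_Mul[of n GS K "\<phi> x" "P x"] by (simp add: prodL_def)
qed

lemma definable_mono: "definable n GS K C F \<Longrightarrow> C \<subseteq> C' \<Longrightarrow> definable n GS K C' F"
  unfolding definable_def by blast

lemma finite_values_if_local:
  assumes "finite GS"
    and "\<And>X \<nu> \<nu>'. X \<in> GS \<Longrightarrow> \<nu> \<in> valuations K n \<Longrightarrow> (\<And>x. x \<in> {1..K} \<Longrightarrow> \<nu> x = \<nu>' x) \<Longrightarrow>
      F X \<nu> = F X \<nu>'"
  shows "finite {F X \<nu> | X \<nu>. X \<in> GS \<and> \<nu> \<in> valuations K n}"
proof (rule finite_subset)
  show "{F X \<nu> | X \<nu>. X \<in> GS \<and> \<nu> \<in> valuations K n} \<subseteq>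
      (\<lambda>(X, \<rho>). F X \<rho>) ` (GS \<times> PiE {1..K} (\<lambda>_. {1..n}))"
  proof clarify
    fix X \<nu> assume "X \<in> GS" "\<nu> \<in> valuations K n"
    moreover have "restrict \<nu> {1..K} \<in> PiE {1..K} (\<lambda>_. {1..n})"
      using \<open>\<nu> \<in> valuations K n\<close> by (auto simp: valuations_def)
    moreover have "F X \<nu> = F X (restrict \<nu> {1..K})"
      by (rule assms(2)) (use calculation in simp_all)
    ultimately show "F X \<nu> \<in> (\<lambda>(X, \<rho>). F X \<rho>) ` (GS \<times> PiE {1..K} (\<lambda>_. {1..n}))"
      by (auto intro!: image_eqI[where x = "(X, restrict \<nu> {1..K})"])
  qed
  show "finite ((\<lambda>(X, \<rho>). F X \<rho>) ` (GS \<times> PiE {1..K} (\<lambda>_. {1..n})))"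
    using assms(1) by (simp add: finite_PiE)
qed

text \<open>A definable function only depends on the values of \<open>x\<^sub>1, \<dots>, x\<^sub>K\<close>, because the defining
  expressions do.\<close>

lemma definable_finite_values:
  assumes "finite GS" "definable n GS K (TL_over l \<Omega> K S t) F"
  shows "finite {F X \<nu> | X \<nu>. X \<in> GS \<and> \<nu> \<in> valuations K n}"
proof -
  have "F X \<nu> = F X \<nu>'"
    if X: "X \<in> GS" and \<nu>: "\<nu> \<in> valuations K n" and \<nu>\<nu>': "\<And>x. x \<in> {1..K} \<Longrightarrow> \<nu> x = \<nu>' x" for X \<nu> \<nu>'
  proof -
    obtain \<phi> where \<phi>: "\<phi> \<in> TL_over l \<Omega> K S t" "indicates n GS K \<phi> (\<lambda>Y \<mu>. F Y \<mu> = F X \<nu>')"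
      using assms(2) unfolding definable_def by blast
    have \<nu>': "\<nu>' \<in> valuations K n" using \<nu> \<nu>\<nu>' by (auto simp: valuations_def)
    have "sem n X \<nu> \<phi> = sem n X \<nu>' \<phi>" using \<phi>(1) \<nu>\<nu>' by (rule sem_TL_over_cong)
    also have "\<dots> = 1" using \<phi>(2) X \<nu>' unfolding indicates_def by simp
    finally show ?thesis using \<phi>(2) X \<nu> unfolding indicates_def by (simp split: if_splits)
  qed
  then show ?thesis by (rule finite_values_if_local[OF assms(1)])
qed

lemma definable_sem:
  assumes "finite GS" "1 \<le> K" "\<psi> \<in> TL_over l \<Omega> K S t"
  shows "definable n GS K (TL_over l \<Omega> K S t) (\<lambda>X \<nu>. sem n X \<nu> \<psi>)"
  unfolding definable_def
proof
  fix a
  have "finite {sem n X \<nu> \<psi> | X \<nu>. X \<in> GS \<and> \<nu> \<in> valuations K n}"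
    using sem_TL_over_cong[OF assms(3)]
    by (rule finite_values_if_local[OF assms(1), where F = "\<lambda>X \<nu>. sem n X \<nu> \<psi>"])
  from finite_list[OF this] obtain bs
    where bs: "set bs = {sem n X \<nu> \<psi> | X \<nu>. X \<in> GS \<and> \<nu> \<in> valuations K n}" ..
  have "indicates n GS K (lagrange_indicator bs a \<psi>) (\<lambda>X \<nu>. sem n X \<nu> \<psi> = a)"
    unfolding indicates_def
  proof (intro ballI)
    fix X \<nu> assume "X \<in> GS" "\<nu> \<in> valuations K n"
    then have "sem n X \<nu> \<psi> \<in> set bs" using bs by blast
    then show "sem n X \<nu> (lagrange_indicator bs a \<psi>) = (if sem n X \<nu> \<psi> = a then 1 else 0)"
      by (rule sem_lagrange_indicator)
  qed
  moreover have "lagrange_indicator bs a \<psi> \<in> TL_over l \<Omega> K S t"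
    using assms(2,3) by (rule lagrange_indicator_in_TL_over)
  ultimately show "\<exists>\<phi>\<in>TL_over l \<Omega> K S t. indicates n GS K \<phi> (\<lambda>X \<nu>. sem n X \<nu> \<psi> = a)" by blast
qed

lemma definable_const:
  assumes "1 \<le> K"
  shows "definable n GS K (TL_over l \<Omega> K S t) (\<lambda>_ _. c)"
  unfolding definable_def
proof
  fix c'
  show "\<exists>\<phi>\<in>TL_over l \<Omega> K S t. indicates n GS K \<phi> (\<lambda>_ _. c = c')"
  proof (cases "c = c'")
    case True
    then show ?thesis using one_in_TL_over[OF assms] indicates_one by (intro bexI[of _ one]) simp_all
  next
    case False
    then show ?thesis using zero_in_TL_over[OF assms] indicates_zero by (intro bexI[of _ zero]) simp_all
  qed
qed

lemma definable_pair:
  assumes "definable n GS K (TL_over l \<Omega> K S t) F" "definable n GS K (TL_over l \<Omega> K S t) G"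
  shows "definable n GS K (TL_over l \<Omega> K S t) (\<lambda>X \<nu>. (F X \<nu>, G X \<nu>))"
  unfolding definable_def
proof
  fix c :: "'a \<times> 'b"
  obtain \<phi> \<psi> where \<phi>: "\<phi> \<in> TL_over l \<Omega> K S t" "indicates n GS K \<phi> (\<lambda>X \<nu>. F X \<nu> = fst c)"
    and \<psi>: "\<psi> \<in> TL_over l \<Omega> K S t" "indicates n GS K \<psi> (\<lambda>X \<nu>. G X \<nu> = snd c)"
    using assms unfolding definable_def by blast
  have "indicates n GS K (Mul \<phi> \<psi>) (\<lambda>X \<nu>. (F X \<nu>, G X \<nu>) = c)"
    by (rule indicates_cong[OF indicates_Mul[OF \<phi>(2) \<psi>(2)]]) (simp add: prod_eq_iff)
  then show "\<exists>\<phi>\<in>TL_over l \<Omega> K S t. indicates n GS K \<phi> (\<lambda>X \<nu>. (F X \<nu>, G X \<nu>) = c)"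
    using Mul_in_TL_over[OF \<phi>(1) \<psi>(1)] by blast
qed

lemma definable_if_same_fibres:
  assumes "1 \<le> K" "definable n GS K (TL_over l \<Omega> K S t) G"
    and "\<And>X \<nu> Y \<mu>. X \<in> GS \<Longrightarrow> \<nu> \<in> valuations K n \<Longrightarrow> Y \<in> GS \<Longrightarrow> \<mu> \<in> valuations K n \<Longrightarrow>
      F X \<nu> = F Y \<mu> \<longleftrightarrow> G X \<nu> = G Y \<mu>"
  shows "definable n GS K (TL_over l \<Omega> K S t) F"
  unfolding definable_def
proof
  fix c
  show "\<exists>\<phi>\<in>TL_over l \<Omega> K S t. indicates n GS K \<phi> (\<lambda>X \<nu>. F X \<nu> = c)"
  proof (cases "\<exists>Y\<in>GS. \<exists>\<mu>\<in>valuations K n. F Y \<mu> = c")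
    case True
    then obtain Y \<mu> where Y\<mu>: "Y \<in> GS" "\<mu> \<in> valuations K n" "F Y \<mu> = c" by blast
    obtain \<phi> where \<phi>: "\<phi> \<in> TL_over l \<Omega> K S t" "indicates n GS K \<phi> (\<lambda>X \<nu>. G X \<nu> = G Y \<mu>)"
      using assms(2) unfolding definable_def by blast
    have "indicates n GS K \<phi> (\<lambda>X \<nu>. F X \<nu> = c)"
      by (rule indicates_cong[OF \<phi>(2)]) (use assms(3) Y\<mu> in auto)
    with \<phi>(1) show ?thesis by blast
  next
    case False
    have "indicates n GS K zero (\<lambda>X \<nu>. F X \<nu> = c)"
      by (rule indicates_cong[OF indicates_zero]) (use False in auto)
    with zero_in_TL_over[OF assms(1)] show ?thesis by blast
  qed
qed

lemma definable_map:
  assumes "1 \<le> K" "\<And>x. x \<in> set xs \<Longrightarrow> definable n GS K (TL_over l \<Omega> K S t) (F x)"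
  shows "definable n GS K (TL_over l \<Omega> K S t) (\<lambda>X \<nu>. map (\<lambda>x. F x X \<nu>) xs)"
  using assms(2)
proof (induction xs)
  case Nil
  show ?case using definable_const[OF assms(1), of n GS l \<Omega> S t "[]"] by simp
next
  case (Cons x xs)
  have "definable n GS K (TL_over l \<Omega> K S t) (F x)" using Cons.prems by simp
  moreover have "definable n GS K (TL_over l \<Omega> K S t) (\<lambda>X \<nu>. map (\<lambda>x. F x X \<nu>) xs)"
    using Cons.IH Cons.prems by simp
  ultimately have "definable n GS K (TL_over l \<Omega> K S t) (\<lambda>X \<nu>. (F x X \<nu>, map (\<lambda>x. F x X \<nu>) xs))"
    by (rule definable_pair)
  then show ?case by (rule definable_if_same_fibres[OF assms(1)]) simp
qed

lemma multiset_eq_iff_on: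
  assumes "set_mset M \<subseteq> R" "set_mset N \<subseteq> R"
  shows "M = N \<longleftrightarrow> (\<forall>e\<in>R. count M e = count N e)"
  using assms by (auto simp: multiset_eq_iff) (metis count_eq_zero_iff subsetD)

lemma sem_Sum_count:
  assumes "indicates n GS K \<phi> (\<lambda>X \<nu>. g X \<nu> = e)" "X \<in> GS" "\<nu> \<in> valuations K n"
  shows "sem n X \<nu> (Sum z \<phi>) = real (count (image_mset (\<lambda>u. g X (\<nu>(z := u))) (mset_set {1..n})) e)"
proof -
  have "sem n X \<nu> (Sum z \<phi>) = (\<Sum>u\<in>{1..n}. if g X (\<nu>(z := u)) = e then 1 else 0)"
    using assms fun_upd_in_valuations unfolding indicates_def by simp
  then show ?thesis by (simp add: count_image_mset_set of_nat_sum of_bool_def[symmetric])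
qed

text \<open>Summing over the fresh variable \<open>z\<close> counts how often each value occurs in the multiset; the
  counts are then compared with those of a given multiset by Lagrange indicators.\<close>

lemma definable_image_mset:
  assumes "finite GS" "1 \<le> K" "z \<in> {1..K}"
    and g: "definable n GS K (TL_over l \<Omega> K (insert z S) t) g"
  shows "definable n GS K (TL_over l \<Omega> K S (Suc t))
    (\<lambda>X \<nu>. image_mset (\<lambda>u. g X (\<nu>(z := u))) (mset_set {1..n}))"
  unfolding definable_def
proof
  fix M
  let ?m = "\<lambda>X \<nu>. image_mset (\<lambda>u. g X (\<nu>(z := u))) (mset_set {1..n})"
  define R where "R = {g X \<nu> | X \<nu>. X \<in> GS \<and> \<nu> \<in> valuations K n}"
  have m_R: "set_mset (?m X \<nu>) \<subseteq> R" if "X \<in> GS" "\<nu> \<in> valuations K n" for X \<nu>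
  proof -
    have "g X (\<nu>(z := u)) \<in> R" if "u \<in> {1..n}" for u
      unfolding R_def using \<open>X \<in> GS\<close> fun_upd_in_valuations[OF \<open>\<nu> \<in> valuations K n\<close> that] by blast
    then show ?thesis by auto
  qed
  show "\<exists>\<phi>\<in>TL_over l \<Omega> K S (Suc t). indicates n GS K \<phi> (\<lambda>X \<nu>. ?m X \<nu> = M)"
  proof (cases "set_mset M \<subseteq> R")
    case False
    have "indicates n GS K zero (\<lambda>X \<nu>. ?m X \<nu> = M)"
      by (rule indicates_cong[OF indicates_zero]) (metis False m_R)
    with zero_in_TL_over[OF assms(2)] show ?thesis by blast
  next
    case True
    from g have "\<forall>e. \<exists>\<phi>. \<phi> \<in> TL_over l \<Omega> K (insert z S) t \<and> indicates n GS K \<phi> (\<lambda>X \<nu>. g X \<nu> = e)"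
      unfolding definable_def by blast
    from choice[OF this] obtain ind where ind: "\<And>e. ind e \<in> TL_over l \<Omega> K (insert z S) t"
      "\<And>e. indicates n GS K (ind e) (\<lambda>X \<nu>. g X \<nu> = e)"
      by blast
    have count: "sem n X \<nu> (Sum z (ind e)) = real (count (?m X \<nu>) e)"
      if "X \<in> GS" "\<nu> \<in> valuations K n" for X \<nu> e
      using ind(2) that by (rule sem_Sum_count)
    have "\<exists>\<psi>\<in>TL_over l \<Omega> K S (Suc t).
        indicates n GS K \<psi> (\<lambda>X \<nu>. sem n X \<nu> (Sum z (ind e)) = real (count M e))" for e
      using definable_sem[OF assms(1,2) Sum_in_TL_over[OF ind(1) assms(3)]]
      unfolding definable_def by blast
    then obtain cnt where cnt: "\<And>e. cnt e \<in> TL_over l \<Omega> K S (Suc t)"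
      "\<And>e. indicates n GS K (cnt e) (\<lambda>X \<nu>. sem n X \<nu> (Sum z (ind e)) = real (count M e))"
      by metis
    obtain Rl where Rl: "set Rl = R"
      using finite_list[OF definable_finite_values[OF assms(1) g]] unfolding R_def ..
    have "indicates n GS K (prodL (map cnt Rl))
        (\<lambda>X \<nu>. \<forall>e\<in>set Rl. sem n X \<nu> (Sum z (ind e)) = real (count M e))"
      using cnt(2) by (rule indicates_prodL)
    then have "indicates n GS K (prodL (map cnt Rl)) (\<lambda>X \<nu>. ?m X \<nu> = M)"
      by (rule indicates_cong) (simp only: count Rl multiset_eq_iff_on[OF m_R True] of_nat_eq_iff)
    moreover have "prodL (map cnt Rl) \<in> TL_over l \<Omega> K S (Suc t)"
      using cnt(1) by (intro prodL_in_TL_over[OF assms(2)]) auto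
    ultimately show ?thesis by blast
  qed
qed

lemma col_length: "is_graph n l G \<Longrightarrow> v \<in> {1..n} \<Longrightarrow> length (col G v) = l"
  unfolding is_graph_def by auto

definition atoms :: "nat list \<Rightarrow> nat \<Rightarrow> tl list" where
  "atoms \<tau> l = [EqI x y. x \<leftarrow> \<tau>, y \<leftarrow> \<tau>] @ [Edge x y. x \<leftarrow> \<tau>, y \<leftarrow> \<tau>] @ [Lab s x. x \<leftarrow> \<tau>, s \<leftarrow> [1..<Suc l]]"

lemma atoms_in_TL_over: "\<psi> \<in> set (atoms \<tau> l) \<Longrightarrow> set \<tau> \<subseteq> {1..K} \<Longrightarrow> \<psi> \<in> TL_over l \<Omega> K (set \<tau>) 0"
  by (auto simp: atoms_def TL_over_def TL_def)

lemma ball_set_atoms_iff: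
  "(\<forall>\<psi>\<in>set (atoms \<tau> l). Q \<psi>) \<longleftrightarrow>
    (\<forall>x\<in>set \<tau>. \<forall>y\<in>set \<tau>. Q (EqI x y) \<and> Q (Edge x y)) \<and> (\<forall>x\<in>set \<tau>. \<forall>s\<in>{1..l}. Q (Lab s x))"
proof -
  have "set (atoms \<tau> l) = {EqI x y | x y. x \<in> set \<tau> \<and> y \<in> set \<tau>} \<union>
      {Edge x y | x y. x \<in> set \<tau> \<and> y \<in> set \<tau>} \<union> {Lab s x | s x. x \<in> set \<tau> \<and> s \<in> {1..l}}"
    unfolding atoms_def by (auto simp del: upt_Suc simp add: atLeastLessThanSuc_atLeastAtMost)
  then show ?thesis by auto
qed

lemma list_eq_iff_nth_pred_eq:
  assumes "length xs = l" "length ys = l"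
  shows "xs = ys \<longleftrightarrow> (\<forall>s\<in>{1..l}. xs ! (s - 1) = ys ! (s - 1))"
proof -
  have "(\<forall>s\<in>{1..l}. xs ! (s - 1) = ys ! (s - 1)) \<longleftrightarrow> (\<forall>i<l. xs ! i = ys ! i)"
  proof
    assume H: "\<forall>s\<in>{1..l}. xs ! (s - 1) = ys ! (s - 1)"
    show "\<forall>i<l. xs ! i = ys ! i"
    proof (intro allI impI)
      fix i assume "i < l"
      then have "Suc i \<in> {1..l}" by simp
      then show "xs ! i = ys ! i" using H by (metis diff_Suc_1)
    qed
  qed auto
  then show ?thesis using assms by (simp add: list_eq_iff_nth_eq)
qed

lemma same_atomic_type_iff_atoms:
  assumes "\<And>x. x \<in> set \<tau> \<Longrightarrow> length (col X (\<nu> x)) = l \<and> length (col Y (\<mu> x)) = l"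
  shows "same_atomic_type X Y \<nu> \<mu> (set \<tau>) \<longleftrightarrow> (\<forall>\<psi>\<in>set (atoms \<tau> l). sem n X \<nu> \<psi> = sem n Y \<mu> \<psi>)"
proof -
  have col: "col X (\<nu> x) = col Y (\<mu> x) \<longleftrightarrow> (\<forall>s\<in>{1..l}. col X (\<nu> x) ! (s - 1) = col Y (\<mu> x) ! (s - 1))"
    if "x \<in> set \<tau>" for x
    using assms[OF that] by (simp add: list_eq_iff_nth_pred_eq)
  have "(\<forall>\<psi>\<in>set (atoms \<tau> l). sem n X \<nu> \<psi> = sem n Y \<mu> \<psi>) \<longleftrightarrow>
      (\<forall>x\<in>set \<tau>. \<forall>y\<in>set \<tau>. (\<nu> x = \<nu> y \<longleftrightarrow> \<mu> x = \<mu> y) \<and> ({\<nu> x, \<nu> y} \<in> edges X \<longleftrightarrow> {\<mu> x, \<mu> y} \<in> edges Y)) \<and>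
      (\<forall>x\<in>set \<tau>. \<forall>s\<in>{1..l}. col X (\<nu> x) ! (s - 1) = col Y (\<mu> x) ! (s - 1))"
  proof -
    have indicator_eq: "(if P then 1 else 0) = (if Q then 1 else (0::real)) \<longleftrightarrow> (P \<longleftrightarrow> Q)" for P Q
      by simp
    show ?thesis unfolding ball_set_atoms_iff sem.simps indicator_eq ..
  qed
  also have "\<dots> \<longleftrightarrow> same_atomic_type X Y \<nu> \<mu> (set \<tau>)"
    unfolding same_atomic_type_def using col by (simp cong: ball_cong)
  finally show ?thesis ..
qed

lemma definable_atp:
  assumes "finite GS" "\<And>X. X \<in> GS \<Longrightarrow> is_graph n l X" "1 \<le> K" "set \<tau> \<subseteq> {1..K}"
  shows "definable n GS K (TL_over l \<Omega> K (set \<tau>) 0) (\<lambda>X \<nu>. atp X (map \<nu> \<tau>))"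
proof (rule definable_if_same_fibres[OF assms(3)])
  show "definable n GS K (TL_over l \<Omega> K (set \<tau>) 0) (\<lambda>X \<nu>. map (\<lambda>\<psi>. sem n X \<nu> \<psi>) (atoms \<tau> l))"
    using assms(4) by (intro definable_map[OF assms(3)] definable_sem[OF assms(1,3)] atoms_in_TL_over)
next
  fix X \<nu> Y \<mu> assume XY: "X \<in> GS" "\<nu> \<in> valuations K n" "Y \<in> GS" "\<mu> \<in> valuations K n"
  then have "length (col X (\<nu> x)) = l \<and> length (col Y (\<mu> x)) = l" if "x \<in> set \<tau>" for x
    using that assms(2,4) col_length unfolding valuations_def by blast
  moreover have "loopless X" "loopless Y" using XY(1,3) assms(2) is_graph_loopless by blast+
  ultimately show "atp X (map \<nu> \<tau>) = atp Y (map \<mu> \<tau>) \<longleftrightarrow>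
      map (\<lambda>\<psi>. sem n X \<nu> \<psi>) (atoms \<tau> l) = map (\<lambda>\<psi>. sem n Y \<mu> \<psi>) (atoms \<tau> l)"
    by (simp add: atp_map_eq_iff same_atomic_type_iff_atoms map_eq_conv)
qed

lemma definable_image_wl_step:
  assumes "finite GS" "\<And>X. X \<in> GS \<Longrightarrow> is_graph n l X"
    and "length \<sigma> = k" "set \<sigma> \<subseteq> {1..Suc k}" "z \<in> {1..Suc k}" "z \<notin> set \<sigma>"
    and "\<And>i. definable n GS (Suc k) (TL_over l \<Omega> (Suc k) (set (\<sigma>[i := z])) t)
      (\<lambda>X \<nu>. wl n X t (map \<nu> (\<sigma>[i := z])))"
  shows "definable n GS (Suc k) (TL_over l \<Omega> (Suc k) (set \<sigma>) (Suc t))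
    (\<lambda>X \<nu>. image_mset (wl_step n X t (map \<nu> \<sigma>)) (mset_set {1..n}))"
proof -
  let ?C = "TL_over l \<Omega> (Suc k) (insert z (set \<sigma>)) t"
  define g where "g = (\<lambda>X \<nu>. (atp X (map \<nu> (\<sigma> @ [z])), map (\<lambda>i. wl n X t (map \<nu> (\<sigma>[i := z]))) [0..<k]))"
  have "definable n GS (Suc k) (TL_over l \<Omega> (Suc k) (set (\<sigma> @ [z])) 0) (\<lambda>X \<nu>. atp X (map \<nu> (\<sigma> @ [z])))"
    using assms(4,5) by (intro definable_atp[OF assms(1,2)]) simp_all
  then have "definable n GS (Suc k) ?C (\<lambda>X \<nu>. atp X (map \<nu> (\<sigma> @ [z])))"
    by (rule definable_mono) (simp add: TL_over_mono)
  moreover have "definable n GS (Suc k) ?C (\<lambda>X \<nu>. map (\<lambda>i. wl n X t (map \<nu> (\<sigma>[i := z]))) [0..<k])"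
  proof (rule definable_map)
    fix i
    show "definable n GS (Suc k) ?C (\<lambda>X \<nu>. wl n X t (map \<nu> (\<sigma>[i := z])))"
      using assms(7) by (rule definable_mono) (simp add: TL_over_mono set_update_subset_insert)
  qed simp
  ultimately have "definable n GS (Suc k) ?C g" unfolding g_def by (rule definable_pair)
  from definable_image_mset[OF assms(1) _ assms(5) this]
  have "definable n GS (Suc k) (TL_over l \<Omega> (Suc k) (set \<sigma>) (Suc t))
      (\<lambda>X \<nu>. image_mset (\<lambda>u. g X (\<nu>(z := u))) (mset_set {1..n}))"
    by simp
  moreover have "g X (\<nu>(z := u)) = wl_step n X t (map \<nu> \<sigma>) u" for X \<nu> u
    using assms(3,6) by (simp add: g_def wl_step_def map_update)
  ultimately show ?thesis by simp
qed

lemma definable_wl: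
  assumes "finite GS" "\<And>X. X \<in> GS \<Longrightarrow> is_graph n l X"
  shows "length \<sigma> = k \<Longrightarrow> set \<sigma> \<subseteq> {1..Suc k} \<Longrightarrow>
    definable n GS (Suc k) (TL_over l \<Omega> (Suc k) (set \<sigma>) t) (\<lambda>X \<nu>. wl n X t (map \<nu> \<sigma>))"
proof (induction t arbitrary: \<sigma>)
  case 0
  have "definable n GS (Suc k) (TL_over l \<Omega> (Suc k) (set \<sigma>) 0) (\<lambda>X \<nu>. atp X (map \<nu> \<sigma>))"
    using "0.prems" by (intro definable_atp[OF assms]) simp_all
  then show ?case by (rule definable_if_same_fibres[rotated]) simp_all
next
  case (Suc t)
  obtain z where z: "z \<in> {1..Suc k}" "z \<notin> set \<sigma>"
  proof -
    have "card (set \<sigma>) < card {1..Suc k}" using card_length[of \<sigma>] Suc.prems(1) by simp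
    then have "\<not> {1..Suc k} \<subseteq> set \<sigma>" by (meson List.finite_set card_mono not_le)
    then show ?thesis using that by blast
  qed
  have upd: "length (\<sigma>[i := z]) = k" "set (\<sigma>[i := z]) \<subseteq> {1..Suc k}" for i
    using Suc.prems z set_update_subset_insert[of \<sigma> i z] by auto
  have steps: "definable n GS (Suc k) (TL_over l \<Omega> (Suc k) (set \<sigma>) (Suc t))
      (\<lambda>X \<nu>. image_mset (wl_step n X t (map \<nu> \<sigma>)) (mset_set {1..n}))"
    using assms(2) Suc.IH[OF upd] by (rule definable_image_wl_step[OF assms(1) _ Suc.prems z])
  have "definable n GS (Suc k) (TL_over l \<Omega> (Suc k) (set \<sigma>) (Suc t)) (\<lambda>X \<nu>. wl n X t (map \<nu> \<sigma>))"
    using Suc.IH[OF Suc.prems] by (rule definable_mono) (simp add: TL_over_mono)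
  from definable_pair[OF this steps] show ?case
    by (rule definable_if_same_fibres[rotated]) (simp_all add: wl_step_def[abs_def])
qed

lemma vwl_eq_if_sem_eq:
  assumes "is_graph n l X" "is_graph n l Y" "k \<ge> 1" "v \<in> {1..n}" "w \<in> {1..n}"
    and "\<forall>\<phi>\<in>TL l \<Omega> (k + 1) t. free_vars \<phi> \<subseteq> {1} \<longrightarrow> sem n X (\<lambda>_. v) \<phi> = sem n Y (\<lambda>_. w) \<phi>"
  shows "wl n X t (replicate k v) = wl n Y t (replicate k w)"
proof -
  have "definable n {X, Y} (Suc k) (TL_over l \<Omega> (Suc k) {1} t) (\<lambda>Z \<nu>. wl n Z t (map \<nu> (replicate k 1)))"
    using definable_wl[of "{X, Y}" n l "replicate k 1" k \<Omega> t] assms(1-3) by auto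
  then obtain \<phi> where \<phi>: "\<phi> \<in> TL_over l \<Omega> (Suc k) {1} t"
    "indicates n {X, Y} (Suc k) \<phi> (\<lambda>Z \<nu>. wl n Z t (map \<nu> (replicate k 1)) = wl n X t (replicate k v))"
    unfolding definable_def by blast
  have "(\<lambda>_. v) \<in> valuations (Suc k) n" "(\<lambda>_. w) \<in> valuations (Suc k) n"
    using assms(4,5) by (simp_all add: valuations_def)
  then have "sem n X (\<lambda>_. v) \<phi> = 1"
    and "sem n Y (\<lambda>_. w) \<phi> = (if wl n Y t (replicate k w) = wl n X t (replicate k v) then 1 else 0)"
    using \<phi>(2) unfolding indicates_def by (simp_all add: map_replicate_const)
  moreover have "sem n X (\<lambda>_. v) \<phi> = sem n Y (\<lambda>_. w) \<phi>"
    using assms(6) \<phi>(1) unfolding TL_over_def by simp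
  ultimately show ?thesis by (simp split: if_splits)
qed

theorem theorem2:
  fixes n l k t :: nat and \<Omega> :: "(nat \<times> (real list \<Rightarrow> real)) set"
  assumes "n \<ge> 1" and "l \<ge> 1" and "k \<ge> 1"
    and "\<forall>(p, f)\<in>\<Omega>. p \<ge> 1"
  shows "rho1_vwl n l k t = rho1_TL n l (TL l \<Omega> (k + 1) t)"
proof -
  have "wl n G t (replicate k v) = wl n H t (replicate k w) \<longleftrightarrow>
      (\<forall>\<phi>\<in>TL l \<Omega> (k + 1) t. free_vars \<phi> \<subseteq> {1} \<longrightarrow> sem n G (\<lambda>_. v) \<phi> = sem n H (\<lambda>_. w) \<phi>)"
    if "is_graph n l G" "is_graph n l H" "v \<in> {1..n}" "w \<in> {1..n}" for G H v w
    using sem_eq_if_vwl_eq[OF that(1,2) assms(3)] vwl_eq_if_sem_eq[OF that(1,2) assms(3) that(3,4)]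
    by blast
  then show ?thesis unfolding rho1_vwl_def rho1_TL_def vwl_def by auto
qed

end
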